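(* For $u\ge0$ define $$\underline{\hat\kappa}^{VG}_{\tilde A}(u)=-\tilde A\tilde mu+\frac{e}{\eta}\Big[-\frac{e^{\tilde Au}\tilde Au}{C+D+2}\Big(\frac{1}{\tilde Au}\wedge1\Big)^{C+D+2}+\frac{e^{\tilde Au}}{C+D+1}\Big(\frac{1}{\tilde Au}\wedge1\Big)^{C+D+1}+\frac{\tilde Au}{C+D+2}-\frac{1+\tilde Au}{C+D+1}\Big],$$ which for $u\ge1/\tilde A$ equals $$-\tilde A\tilde mu+\frac{e}{\eta}\Big[\Big(\frac{1}{\tilde Au}\Big)^{C+D+1}e^{\tilde Au}\Big(\frac{1}{C+D+1}-\frac{1}{C+D+2}\Big)+\frac{\tilde Au}{C+D+2}-\frac{1+\tilde Au}{C+D+1}\Big].$$ Then $\hat\kappa^{VG}_{\tilde A}(u)\ge\underline{\hat\kappa}^{VG}_{\tilde A}(u)$ for all $u\ge0$.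
   Context: Variance-gamma setup: constants $\theta\in\mathbb R$, $\rho>0$, $\eta>0$; $C=\theta/\rho^2$, $D=\sqrt{\theta^2+2\rho^2/\eta}/\rho^2$ (so $C+D>0$), and assume $D-C>2$. Let $\tilde\kappa(x)=-\frac1\eta\ln\big(1-\frac{x^2\rho^2\eta}{2}-\theta\eta x\big)$ (the cumulant generating function of the VG process $\theta\tau_t+\rho W_{\tau_t}$ at time 1, $\tau$ a gamma subordinator with $\tau_t\sim\Gamma(t/\eta,1/\eta)$), and $\tilde m=\tilde\kappa(1)$. Let $\hat\nu$ be the measure on $(-1,\infty)\setminus\{0\}$ given by $\hat\nu(dx)=\frac{-1}{\eta\ln(x+1)}(x+1)^{C+D-1}\,dx$ for $x\in(-1,0)$ and $\hat\nu(dx)=\frac{1}{\eta\ln(x+1)}(x+1)^{C-D-1}\,dx$ for $x\in(0,\infty)$. For constants $A>0$, $\tilde s>0$, $\tilde A=A\tilde s$, define for $u\ge0$ $$\hat\kappa^{VG}_{\tilde A}(u)=-\tilde A\tilde mu+\int_{-1}^\infty\big(e^{-\tilde Aux}-1+\tilde Aux\big)\,\hat\nu(dx).$$ Here $a\wedge b=\min(a,b)$, with the convention $1/(\tilde A\cdot 0)\wedge 1=1$. *)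

theory Defs
  imports "HOL-Analysis.Analysis"
begin

definition vgC :: "real \<Rightarrow> real \<Rightarrow> real" where
  "vgC \<theta> \<rho> = \<theta> / \<rho>^2"

definition vgD :: "real \<Rightarrow> real \<Rightarrow> real \<Rightarrow> real" where
  "vgD \<theta> \<rho> \<eta> = sqrt (\<theta>^2 + 2 * \<rho>^2 / \<eta>) / \<rho>^2"

text \<open>Cumulant generating function of the VG process at time 1.\<close>
definition vg_kappa :: "real \<Rightarrow> real \<Rightarrow> real \<Rightarrow> real \<Rightarrow> real" where
  "vg_kappa \<theta> \<rho> \<eta> x = - (1/\<eta>) * ln (1 - x^2 * \<rho>^2 * \<eta> / 2 - \<theta> * \<eta> * x)"

definition vg_m :: "real \<Rightarrow> real \<Rightarrow> real \<Rightarrow> real" where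
  "vg_m \<theta> \<rho> \<eta> = vg_kappa \<theta> \<rho> \<eta> 1"

definition vg_nu_density :: "real \<Rightarrow> real \<Rightarrow> real \<Rightarrow> real \<Rightarrow> real" where
  "vg_nu_density \<theta> \<rho> \<eta> x =
     (if -1 < x \<and> x < 0 then -1 / (\<eta> * ln (x + 1)) * (x + 1) powr (vgC \<theta> \<rho> + vgD \<theta> \<rho> \<eta> - 1)
      else if 0 < x then 1 / (\<eta> * ln (x + 1)) * (x + 1) powr (vgC \<theta> \<rho> - vgD \<theta> \<rho> \<eta> - 1)
      else 0)"

definition vg_nu :: "real \<Rightarrow> real \<Rightarrow> real \<Rightarrow> real measure" where
  "vg_nu \<theta> \<rho> \<eta> = density lborel (\<lambda>x. ennreal (vg_nu_density \<theta> \<rho> \<eta> x))"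

definition kappa_hat :: "real \<Rightarrow> real \<Rightarrow> real \<Rightarrow> real \<Rightarrow> real \<Rightarrow> real" where
  "kappa_hat \<theta> \<rho> \<eta> At u =
     - At * vg_m \<theta> \<rho> \<eta> * u
     + (\<integral>x. (exp (- At * u * x) - 1 + At * u * x) \<partial>vg_nu \<theta> \<rho> \<eta>)"

definition minfac :: "real \<Rightarrow> real" where
  "minfac y = (if y = 0 then 1 else min (1 / y) 1)"

definition kappa_hat_lower :: "real \<Rightarrow> real \<Rightarrow> real \<Rightarrow> real \<Rightarrow> real \<Rightarrow> real" where
  "kappa_hat_lower \<theta> \<rho> \<eta> At u =
     (let C = vgC \<theta> \<rho>; D = vgD \<theta> \<rho> \<eta>; y = At * u in
      - At * vg_m \<theta> \<rho> \<eta> * u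
      + exp 1 / \<eta> *
        ( - exp y * y / (C + D + 2) * (minfac y) powr (C + D + 2)
          + exp y / (C + D + 1) * (minfac y) powr (C + D + 1)
          + y / (C + D + 2) - (1 + y) / (C + D + 1)))"

end

theory Submission imports Defs begin

text \<open>
  Substituting t = x + 1, the density of nu becomes t^(C+D-1) / (-eta ln t) on (0,1) and
  t^(C-D-1) / (eta ln t) on (1,oo), and with y = A s u the integrand becomes
  e^(y(1-t)) - 1 - y(1-t), which is nonnegative. Drop the part t > 1, use -1 / ln t >= e t on
  (0,1), and use e^(y(1-t)) >= e^y (1 - y t) only on [0,m] with m = min (1/y) 1, which is where
  the right-hand side is nonnegative. What remains are integrals of t^(C+D) times linear
  polynomials over [0,1] and [0,m]. The integrand is integrable because -1 / ln t <= 1 / (1 - t)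
  near t = 1 and t^(C-D) <= t^(-2) at infinity.
\<close>

lemma set_integrable_lborel_of_nonneg:
  fixes f :: "real \<Rightarrow> real"
  assumes "f integrable_on S" "\<And>x. x \<in> S \<Longrightarrow> 0 \<le> f x"
    and [measurable]: "S \<in> sets borel" "f \<in> borel_measurable borel"
  shows "set_integrable lborel S f"
proof -
  have "f absolutely_integrable_on S"
    using assms(1,2) by (simp add: absolutely_integrable_on_iff_nonneg)
  then have "integrable lebesgue (\<lambda>x. indicator S x *\<^sub>R f x)"
    unfolding set_integrable_def .
  then show ?thesis
    unfolding set_integrable_def by (subst (asm) integrable_completion) measurable
qed

lemma set_integrable_powr_from_0:
  fixes a c :: real
  assumes "a > -1" "c \<ge> 0"
  shows "set_integrable lborel {0..c} (\<lambda>x. x powr a)"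
  using integrable_on_powr_from_0[OF assms] by (rule set_integrable_lborel_of_nonneg) auto

lemma set_integral_powr_from_0:
  fixes a c :: real
  assumes "a > -1" "c \<ge> 0"
  shows "(LINT x:{0..c}|lborel. x powr a) = c powr (a + 1) / (a + 1)"
  using set_borel_integral_eq_integral(2)[OF set_integrable_powr_from_0[OF assms]]
    integral_unique[OF has_integral_powr_from_0[OF assms]] by simp

lemma set_integrable_powr_to_inf:
  fixes a e :: real
  assumes "e < -1" "a > 0"
  shows "set_integrable lborel {a..} (\<lambda>x. x powr e)"
proof (rule set_integrable_lborel_of_nonneg)
  show "(\<lambda>x. x powr e) integrable_on {a..}"
    using has_integral_powr_to_inf[OF assms] by (auto simp: integrable_on_def)
qed auto

lemma
  fixes K \<alpha> \<beta> c :: real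
  assumes "K > -1" "c \<ge> 0"
  shows set_integrable_powr_times_linear:
      "set_integrable lborel {0..c} (\<lambda>t. t powr K * (\<alpha> + \<beta> * t))"
    and set_integral_powr_times_linear:
      "(LINT t:{0..c}|lborel. t powr K * (\<alpha> + \<beta> * t))
         = \<alpha> * c powr (K + 1) / (K + 1) + \<beta> * c powr (K + 2) / (K + 2)"
proof -
  have K1: "K + 1 > -1" using assms by simp
  have expand: "t powr K * (\<alpha> + \<beta> * t) = \<alpha> * t powr K + \<beta> * t powr (K + 1)" if "t \<in> {0..c}" for t
    using that powr_mult_base[of t K] by (simp add: algebra_simps)
  have int: "set_integrable lborel {0..c} (\<lambda>t. \<alpha> * t powr K + \<beta> * t powr (K + 1))"
    using set_integrable_powr_from_0[OF assms] set_integrable_powr_from_0[OF K1 assms(2)] by simp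
  then show "set_integrable lborel {0..c} (\<lambda>t. t powr K * (\<alpha> + \<beta> * t))"
    by (rule set_integrable_cong[THEN iffD1, rotated 3]) (simp_all add: expand)
  have "(LINT t:{0..c}|lborel. t powr K * (\<alpha> + \<beta> * t))
          = (LINT t:{0..c}|lborel. \<alpha> * t powr K + \<beta> * t powr (K + 1))"
    by (rule set_lebesgue_integral_cong) (simp_all add: expand)
  also have "\<dots> = \<alpha> * c powr (K + 1) / (K + 1) + \<beta> * c powr (K + 2) / (K + 2)"
    using int set_integrable_powr_from_0[OF assms] set_integrable_powr_from_0[OF K1 assms(2)]
      set_integral_powr_from_0[OF assms] set_integral_powr_from_0[OF K1 assms(2)]
    by (simp add: add.assoc)
  finally show "(LINT t:{0..c}|lborel. t powr K * (\<alpha> + \<beta> * t))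
         = \<alpha> * c powr (K + 1) / (K + 1) + \<beta> * c powr (K + 2) / (K + 2)" .
qed

lemma exp_mult_le_neg_inverse_ln:
  fixes t :: real
  assumes "0 < t" "t < 1"
  shows "exp 1 * t \<le> -1 / ln t"
proof -
  have "ln (1 / (exp 1 * t)) \<le> 1 / (exp 1 * t) - 1"
    using assms by (intro ln_le_minus_one) auto
  then have "- ln t * (exp 1 * t) \<le> 1"
    using assms by (simp add: ln_div ln_mult field_simps)
  moreover have "ln t < 0" using assms by simp
  ultimately show ?thesis by (simp add: field_simps)
qed

lemma neg_inverse_ln_le:
  fixes t :: real
  assumes "0 < t" "t < 1"
  shows "-1 / ln t \<le> 1 / (1 - t)"
  using ln_le_minus_one[of t] ln_less_zero[of t] assms by (simp add: field_simps)

lemma inverse_ln_le: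
  fixes t :: real
  assumes "1 < t"
  shows "1 / ln t \<le> t / (t - 1)"
  using ln_add1_ge[of "t - 1"] assms by (simp add: field_simps)

lemma exp_minus_one_minus_le:
  fixes a :: real
  assumes "a \<ge> 0"
  shows "exp a - 1 - a \<le> a * exp a"
proof -
  have "exp a * (1 - a) \<le> exp a * exp (- a)"
    using exp_ge_add_one_self[of "- a"] by (intro mult_left_mono) auto
  then show ?thesis using assms by (simp add: exp_minus field_simps)
qed

lemma compensated_exp_nonneg:
  fixes y x :: real
  shows "0 \<le> exp (- y * x) - 1 + y * x"
  using exp_ge_add_one_self[of "- y * x"] by simp

lemma vgC_add_vgD_pos:
  assumes "\<rho> > 0" "\<eta> > 0"
  shows "vgC \<theta> \<rho> + vgD \<theta> \<rho> \<eta> > 0"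
proof -
  have "sqrt (\<theta>\<^sup>2) < sqrt (\<theta>\<^sup>2 + 2 * \<rho>\<^sup>2 / \<eta>)"
    using assms by (intro real_sqrt_less_mono) auto
  then have "\<bar>\<theta>\<bar> / \<rho>\<^sup>2 < vgD \<theta> \<rho> \<eta>"
    unfolding vgD_def using assms by (simp add: divide_strict_right_mono)
  moreover have "- (\<theta> / \<rho>\<^sup>2) \<le> \<bar>\<theta>\<bar> / \<rho>\<^sup>2"
    using abs_ge_minus_self[of "\<theta> / \<rho>\<^sup>2"] by simp
  ultimately show ?thesis unfolding vgC_def by linarith
qed

lemma vg_nu_density_nonneg:
  assumes "\<eta> > 0"
  shows "vg_nu_density \<theta> \<rho> \<eta> x \<ge> 0"
proof (cases "-1 < x \<and> x < 0")
  case True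
  then have "\<eta> * ln (x + 1) < 0" using assms by (simp add: mult_pos_neg)
  with True show ?thesis unfolding vg_nu_density_def by (simp add: divide_simps)
next
  case False
  have "\<eta> * ln (x + 1) > 0" if "0 < x" using that assms by simp
  with False show ?thesis unfolding vg_nu_density_def by auto
qed

lemma borel_measurable_vg_nu_density [measurable]:
  "vg_nu_density \<theta> \<rho> \<eta> \<in> borel_measurable borel"
  unfolding vg_nu_density_def by measurable

lemma integral_vg_nu_shift:
  fixes f :: "real \<Rightarrow> real"
  assumes "\<eta> > 0" and [measurable]: "f \<in> borel_measurable borel"
  shows "(\<integral>x. f x \<partial>vg_nu \<theta> \<rho> \<eta>) = (\<integral>t. vg_nu_density \<theta> \<rho> \<eta> (t - 1) * f (t - 1) \<partial>lborel)"
proof -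
  have "(\<integral>x. f x \<partial>vg_nu \<theta> \<rho> \<eta>) = (\<integral>x. vg_nu_density \<theta> \<rho> \<eta> x * f x \<partial>lborel)"
    unfolding vg_nu_def using vg_nu_density_nonneg[OF assms(1)] by (subst integral_density) auto
  also have "\<dots> = (\<integral>t. vg_nu_density \<theta> \<rho> \<eta> (t - 1) * f (t - 1) \<partial>lborel)"
    using lborel_integral_real_affine[of 1 "\<lambda>x. vg_nu_density \<theta> \<rho> \<eta> x * f x" "-1"] by simp
  finally show ?thesis .
qed

lemma vg_nu_density_shift_ge:
  assumes "\<eta> > 0" "0 < t" "t < 1"
  shows "exp 1 / \<eta> * t powr (vgC \<theta> \<rho> + vgD \<theta> \<rho> \<eta>) \<le> vg_nu_density \<theta> \<rho> \<eta> (t - 1)"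
proof -
  define K where "K = vgC \<theta> \<rho> + vgD \<theta> \<rho> \<eta>"
  have "exp 1 / \<eta> * t powr K = (exp 1 * t) / \<eta> * t powr (K - 1)"
    using powr_mult_base[of t "K - 1"] assms by simp
  also have "\<dots> \<le> (-1 / ln t) / \<eta> * t powr (K - 1)"
    using exp_mult_le_neg_inverse_ln[of t] assms by (intro mult_right_mono divide_right_mono) auto
  also have "\<dots> = vg_nu_density \<theta> \<rho> \<eta> (t - 1)"
    using assms unfolding vg_nu_density_def K_def by simp
  finally show ?thesis unfolding K_def .
qed

lemma vg_nu_density_shift_le_of_less_one:
  assumes "\<eta> > 0" "0 < t" "t < 1"
  shows "vg_nu_density \<theta> \<rho> \<eta> (t - 1) \<le> t powr (vgC \<theta> \<rho> + vgD \<theta> \<rho> \<eta> - 1) / (\<eta> * (1 - t))"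
proof -
  have "vg_nu_density \<theta> \<rho> \<eta> (t - 1) = (-1 / ln t) / \<eta> * t powr (vgC \<theta> \<rho> + vgD \<theta> \<rho> \<eta> - 1)"
    using assms unfolding vg_nu_density_def by simp
  also have "\<dots> \<le> (1 / (1 - t)) / \<eta> * t powr (vgC \<theta> \<rho> + vgD \<theta> \<rho> \<eta> - 1)"
    using neg_inverse_ln_le[of t] assms by (intro mult_right_mono divide_right_mono) auto
  finally show ?thesis by (simp add: mult.commute)
qed

lemma vg_nu_density_shift_le_of_greater_one:
  assumes "\<eta> > 0" "1 < t"
  shows "vg_nu_density \<theta> \<rho> \<eta> (t - 1) \<le> t powr (vgC \<theta> \<rho> - vgD \<theta> \<rho> \<eta>) / (\<eta> * (t - 1))"
proof -
  have "vg_nu_density \<theta> \<rho> \<eta> (t - 1) = (1 / ln t) / \<eta> * t powr (vgC \<theta> \<rho> - vgD \<theta> \<rho> \<eta> - 1)"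
    using assms unfolding vg_nu_density_def by simp
  also have "\<dots> \<le> (t / (t - 1)) / \<eta> * t powr (vgC \<theta> \<rho> - vgD \<theta> \<rho> \<eta> - 1)"
    using inverse_ln_le[of t] assms by (intro mult_right_mono divide_right_mono) auto
  also have "\<dots> = t powr (vgC \<theta> \<rho> - vgD \<theta> \<rho> \<eta>) / (\<eta> * (t - 1))"
    using powr_mult_base[of t "vgC \<theta> \<rho> - vgD \<theta> \<rho> \<eta> - 1"] assms by simp
  finally show ?thesis .
qed

lemma vg_nu_shifted_integrand_le:
  fixes \<theta> \<rho> \<eta> y t :: real
  defines "K \<equiv> vgC \<theta> \<rho> + vgD \<theta> \<rho> \<eta>"
  assumes "\<eta> > 0" "vgD \<theta> \<rho> \<eta> - vgC \<theta> \<rho> > 2" "y \<ge> 0"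
  shows "vg_nu_density \<theta> \<rho> \<eta> (t - 1) * (exp (- y * (t - 1)) - 1 + y * (t - 1))
    \<le> y * exp y / \<eta> * (indicator {0..1} t * t powr (K - 1))
      + y / \<eta> * (indicator {1..} t * t powr - 2)"
  (is "?d * ?F \<le> ?H")
proof -
  have F_nonneg: "?F \<ge> 0" by (rule compensated_exp_nonneg)
  have H_nonneg: "?H \<ge> 0" using assms by simp
  consider "t \<le> 0 \<or> t = 1" | "0 < t \<and> t < 1" | "1 < t" by linarith
  then show ?thesis
  proof cases
    case 1
    then have "?d = 0" unfolding vg_nu_density_def by auto
    with H_nonneg show ?thesis by simp
  next
    case 2
    define a where "a = y * (1 - t)"
    have "0 \<le> a" "a \<le> y" unfolding a_def using 2 assms by (auto simp: mult_left_le)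
    have "?F = exp a - 1 - a" unfolding a_def by (simp add: algebra_simps)
    also have "\<dots> \<le> a * exp a" using exp_minus_one_minus_le \<open>0 \<le> a\<close> .
    also have "\<dots> \<le> y * (1 - t) * exp y"
      unfolding a_def using 2 assms \<open>a \<le> y\<close> by (intro mult_mono) (auto simp: a_def)
    finally have "?F \<le> y * (1 - t) * exp y" .
    then have "?d * ?F \<le> t powr (K - 1) / (\<eta> * (1 - t)) * (y * (1 - t) * exp y)"
      using vg_nu_density_shift_le_of_less_one[of \<eta> t \<theta> \<rho>] vg_nu_density_nonneg[of \<eta> \<theta> \<rho>]
        F_nonneg 2 assms(2)
      unfolding K_def by (intro mult_mono) auto
    also have "\<dots> = ?H" using 2 assms by (simp add: field_simps)
    finally show ?thesis .
  next
    case 3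
    have "exp (- y * (t - 1)) \<le> 1" using 3 assms by simp
    then have "?F \<le> y * (t - 1)" by simp
    then have "?d * ?F \<le> t powr (vgC \<theta> \<rho> - vgD \<theta> \<rho> \<eta>) / (\<eta> * (t - 1)) * (y * (t - 1))"
      using vg_nu_density_shift_le_of_greater_one[of \<eta> t \<theta> \<rho>] vg_nu_density_nonneg[of \<eta> \<theta> \<rho>]
        F_nonneg 3 assms(2)
      by (intro mult_mono) auto
    also have "\<dots> = y / \<eta> * t powr (vgC \<theta> \<rho> - vgD \<theta> \<rho> \<eta>)" using 3 assms by (simp add: field_simps)
    also have "\<dots> \<le> y / \<eta> * t powr - 2"
      using 3 assms by (intro mult_left_mono powr_mono) auto
    also have "\<dots> = ?H" using 3 by simp
    finally show ?thesis .
  qed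
qed

lemma integrable_vg_nu_shifted_integrand:
  fixes \<theta> \<rho> \<eta> y :: real
  assumes "\<eta> > 0" "vgC \<theta> \<rho> + vgD \<theta> \<rho> \<eta> > 0" "vgD \<theta> \<rho> \<eta> - vgC \<theta> \<rho> > 2" "y \<ge> 0"
  shows "integrable lborel
    (\<lambda>t. vg_nu_density \<theta> \<rho> \<eta> (t - 1) * (exp (- y * (t - 1)) - 1 + y * (t - 1)))"
    (is "integrable lborel ?G")
proof -
  define K where "K = vgC \<theta> \<rho> + vgD \<theta> \<rho> \<eta>"
  define H where "H t = y * exp y / \<eta> * (indicator {0..1} t * t powr (K - 1))
    + y / \<eta> * (indicator {1..} t * t powr - 2)" for t :: real
  have "set_integrable lborel {0..1} (\<lambda>t. t powr (K - 1))"
    using assms(2) by (intro set_integrable_powr_from_0) (auto simp: K_def)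
  moreover have "set_integrable lborel {1..} (\<lambda>t::real. t powr - 2)"
    by (intro set_integrable_powr_to_inf) auto
  ultimately have "integrable lborel H"
    unfolding H_def set_integrable_def by simp
  moreover have "?G \<in> borel_measurable lborel" by measurable
  moreover have "AE t in lborel. norm (?G t) \<le> norm (H t)"
  proof (rule AE_I2)
    fix t :: real
    have "0 \<le> ?G t"
      using vg_nu_density_nonneg[OF assms(1)] compensated_exp_nonneg by simp
    then show "norm (?G t) \<le> norm (H t)"
      using vg_nu_shifted_integrand_le[OF assms(1,3,4), of t] unfolding H_def K_def by simp
  qed
  ultimately show ?thesis by (rule Bochner_Integration.integrable_bound)
qed

lemma vg_nu_shifted_integrand_ge:
  fixes \<theta> \<rho> \<eta> y m t :: real
  defines "K \<equiv> vgC \<theta> \<rho> + vgD \<theta> \<rho> \<eta>"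
  assumes "\<eta> > 0" "y \<ge> 0" "m \<le> 1" "t \<noteq> 1"
  shows "exp 1 / \<eta> * (indicator {0..1} t * (t powr K * (- (1 + y) + y * t))
        + indicator {0..m} t * (t powr K * (exp y + - (exp y * y) * t)))
    \<le> vg_nu_density \<theta> \<rho> \<eta> (t - 1) * (exp (- y * (t - 1)) - 1 + y * (t - 1))"
  (is "?L \<le> ?d * ?F")
proof -
  have F_nonneg: "?F \<ge> 0" by (rule compensated_exp_nonneg)
  consider "t \<le> 0" | "0 < t \<and> t < 1" | "1 < t" using assms(5) by linarith
  then show ?thesis
  proof cases
    case 1
    then have "?L = 0" by (cases "t = 0") (auto simp: indicator_def)
    moreover have "?d = 0" using 1 unfolding vg_nu_density_def by auto
    ultimately show ?thesis by (metis mult_zero_left order_refl)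
  next
    case 2
    have "exp y * (1 - y * t) \<le> exp y * exp (- (y * t))"
      using exp_ge_add_one_self[of "- (y * t)"] by (intro mult_left_mono) auto
    also have "\<dots> = exp (y * (1 - t))" by (simp add: algebra_simps flip: exp_add)
    finally have "of_bool (t \<le> m) * (exp y * (1 - y * t)) \<le> exp (y * (1 - t))" by simp
    then have "of_bool (t \<le> m) * (exp y * (1 - y * t)) - 1 - y * (1 - t) \<le> ?F"
      by (simp add: algebra_simps)
    moreover have
      "?L = exp 1 / \<eta> * t powr K * (of_bool (t \<le> m) * (exp y * (1 - y * t)) - 1 - y * (1 - t))"
      using 2 by (simp add: indicator_def algebra_simps)
    moreover have "0 \<le> exp 1 / \<eta> * t powr K" using assms(2) by simp
    ultimately have "?L \<le> exp 1 / \<eta> * t powr K * ?F" by (metis mult_left_mono)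
    also have "\<dots> \<le> ?d * ?F"
      using vg_nu_density_shift_ge[of \<eta> t \<theta> \<rho>] 2 assms(2) F_nonneg
      unfolding K_def by (intro mult_right_mono) auto
    finally show ?thesis .
  next
    case 3
    then have "?L = 0" using assms(4) by (simp add: indicator_def)
    then show ?thesis using vg_nu_density_nonneg[OF assms(2)] F_nonneg by (metis mult_nonneg_nonneg)
  qed
qed

lemma integral_vg_nu_compensated_exp_ge:
  fixes \<theta> \<rho> \<eta> y m :: real
  defines "K \<equiv> vgC \<theta> \<rho> + vgD \<theta> \<rho> \<eta>"
  assumes "\<eta> > 0" "K > 0" "vgD \<theta> \<rho> \<eta> - vgC \<theta> \<rho> > 2" "y \<ge> 0" "0 < m" "m \<le> 1"
  shows "exp 1 / \<eta> * (- exp y * y / (K + 2) * m powr (K + 2) + exp y / (K + 1) * m powr (K + 1)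
            + y / (K + 2) - (1 + y) / (K + 1))
    \<le> (\<integral>x. exp (- y * x) - 1 + y * x \<partial>vg_nu \<theta> \<rho> \<eta>)"
proof -
  define P where "P t = t powr K * (- (1 + y) + y * t)" for t
  define Q where "Q t = t powr K * (exp y + - (exp y * y) * t)" for t
  define L where "L t = exp 1 / \<eta> * (indicator {0..1} t * P t + indicator {0..m} t * Q t)" for t
  define G where "G t = vg_nu_density \<theta> \<rho> \<eta> (t - 1) * (exp (- y * (t - 1)) - 1 + y * (t - 1))"
    for t
  have K: "K > -1" using assms(3) by simp
  have P: "integrable lborel (\<lambda>t. indicator {0..1} t * P t)"
    "(\<integral>t. indicator {0..1} t * P t \<partial>lborel) = - (1 + y) / (K + 1) + y / (K + 2)"
    using set_integrable_powr_times_linear[of K 1 "- (1 + y)" y]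
      set_integral_powr_times_linear[of K 1 "- (1 + y)" y] K
    unfolding P_def set_integrable_def set_lebesgue_integral_def by simp_all
  have Q: "integrable lborel (\<lambda>t. indicator {0..m} t * Q t)"
    "(\<integral>t. indicator {0..m} t * Q t \<partial>lborel)
       = exp y * m powr (K + 1) / (K + 1) - exp y * y * m powr (K + 2) / (K + 2)"
    using set_integrable_powr_times_linear[of K m "exp y" "- (exp y * y)"]
      set_integral_powr_times_linear[of K m "exp y" "- (exp y * y)"] K assms(6)
    unfolding Q_def set_integrable_def set_lebesgue_integral_def by simp_all
  have "exp 1 / \<eta> * (- exp y * y / (K + 2) * m powr (K + 2) + exp y / (K + 1) * m powr (K + 1)
            + y / (K + 2) - (1 + y) / (K + 1))
      = exp 1 / \<eta> * ((\<integral>t. indicator {0..1} t * P t \<partial>lborel)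
          + (\<integral>t. indicator {0..m} t * Q t \<partial>lborel))"
    unfolding P(2) Q(2) by (simp add: diff_divide_distrib add_divide_distrib algebra_simps)
  also have "\<dots> = (\<integral>t. L t \<partial>lborel)"
    unfolding L_def using P(1) Q(1) by simp
  also have "\<dots> \<le> (\<integral>t. G t \<partial>lborel)"
  proof (rule integral_mono_AE)
    show "integrable lborel L" unfolding L_def using P(1) Q(1) by simp
    show "integrable lborel G"
      unfolding G_def using integrable_vg_nu_shifted_integrand assms unfolding K_def by blast
    show "AE t in lborel. L t \<le> G t"
      using AE_lborel_singleton[of 1] by eventually_elim
        (use vg_nu_shifted_integrand_ge assms in \<open>auto simp: L_def G_def P_def Q_def K_def\<close>)
  qed
  also have "\<dots> = (\<integral>x. exp (- y * x) - 1 + y * x \<partial>vg_nu \<theta> \<rho> \<eta>)"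
    using integral_vg_nu_shift[OF assms(2), of "\<lambda>x. exp (- y * x) - 1 + y * x"]
    unfolding G_def by simp
  finally show ?thesis .
qed

lemma minfac_pos: "y \<ge> 0 \<Longrightarrow> minfac y > 0"
  unfolding minfac_def by auto

lemma minfac_le_one: "minfac y \<le> 1"
  unfolding minfac_def by simp

lemma kappa_hat_lower_of_ge_one:
  fixes \<theta> \<rho> \<eta> At u :: real
  defines "K \<equiv> vgC \<theta> \<rho> + vgD \<theta> \<rho> \<eta>"
  assumes "At * u \<ge> 1"
  shows "kappa_hat_lower \<theta> \<rho> \<eta> At u =
    - At * vg_m \<theta> \<rho> \<eta> * u
    + exp 1 / \<eta> * ((1 / (At * u)) powr (K + 1) * exp (At * u) * (1 / (K + 1) - 1 / (K + 2))
                    + At * u / (K + 2) - (1 + At * u) / (K + 1))"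
proof -
  define y where "y = At * u"
  have y: "y \<ge> 1" using assms(2) unfolding y_def .
  have "(1 / y) powr (K + 2) = (1 / y) powr (K + 1) * (1 / y)"
    using powr_add[of "1 / y" "K + 1" 1] y by (simp add: add.assoc)
  then have "- exp y * y / (K + 2) * (1 / y) powr (K + 2) + exp y / (K + 1) * (1 / y) powr (K + 1)
      = (1 / y) powr (K + 1) * exp y * (1 / (K + 1) - 1 / (K + 2))"
    using y by (simp add: field_simps)
  moreover have "minfac y = 1 / y" unfolding minfac_def using y by simp
  ultimately show ?thesis
    unfolding kappa_hat_lower_def Let_def K_def y_def by (simp add: add.assoc)
qed

lemma kappa_hat_ge_lower:
  fixes \<theta> \<rho> \<eta> At u :: real
  assumes "\<rho> > 0" "\<eta> > 0" "vgD \<theta> \<rho> \<eta> - vgC \<theta> \<rho> > 2" "At * u \<ge> 0"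
  shows "kappa_hat_lower \<theta> \<rho> \<eta> At u \<le> kappa_hat \<theta> \<rho> \<eta> At u"
proof -
  from integral_vg_nu_compensated_exp_ge[OF assms(2) vgC_add_vgD_pos[OF assms(1,2)] assms(3,4)
      minfac_pos[OF assms(4)] minfac_le_one]
  show ?thesis unfolding kappa_hat_lower_def kappa_hat_def Let_def by (simp add: mult.assoc)
qed

theorem mainTheorem16:
  fixes \<theta> \<rho> \<eta> A s :: real
  assumes "\<rho> > 0" and "\<eta> > 0"
    and "vgD \<theta> \<rho> \<eta> - vgC \<theta> \<rho> > 2"
    and "A > 0" and "s > 0"
  shows "(\<forall>u \<ge> 1 / (A * s).
            kappa_hat_lower \<theta> \<rho> \<eta> (A * s) u =
              - (A * s) * vg_m \<theta> \<rho> \<eta> * u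
              + exp 1 / \<eta> *
                ( (1 / (A * s * u)) powr (vgC \<theta> \<rho> + vgD \<theta> \<rho> \<eta> + 1) * exp (A * s * u)
                    * (1 / (vgC \<theta> \<rho> + vgD \<theta> \<rho> \<eta> + 1) - 1 / (vgC \<theta> \<rho> + vgD \<theta> \<rho> \<eta> + 2))
                  + A * s * u / (vgC \<theta> \<rho> + vgD \<theta> \<rho> \<eta> + 2)
                  - (1 + A * s * u) / (vgC \<theta> \<rho> + vgD \<theta> \<rho> \<eta> + 1)))
         \<and> (\<forall>u \<ge> 0. kappa_hat \<theta> \<rho> \<eta> (A * s) u \<ge> kappa_hat_lower \<theta> \<rho> \<eta> (A * s) u)"
proof -
  have "A * s * u \<ge> 1" if "u \<ge> 1 / (A * s)" for u
    using that assms by (simp add: field_simps)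
  moreover have "A * s * u \<ge> 0" if "u \<ge> 0" for u
    using that assms by simp
  ultimately show ?thesis
    using kappa_hat_lower_of_ge_one kappa_hat_ge_lower[OF assms(1-3)] by blast
qed

end
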